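(* $z_2(4,4)=10$.
   Context: Double Zarankiewicz number: consider configurations $G=([m],[n],E_1\cup E_2)$ where $[m]=\{1,\dots,m\}$, $E_1\subseteq[m]\times[n]$ is a set of 1-edges (cells) and $E_2$ is a set of 2-edges $(i,j;k,l)$ with $i,k\in[m]$, $j,l\in[n]$, $i\ne k$, $j\ne l$; the cells $(i,j)$ and $(k,l)$ are the two halves of this 2-edge. Simplicity condition: the halves of all 2-edges are pairwise distinct cells and none of them belongs to $E_1$. A cell is occupied if it lies in $E_1$ or is a half of some 2-edge. $G$ contains a generalized $C_4$-cycle if (1) there are four 1-edges $(i,j),(i,l),(k,j),(k,l)\in E_1$ with $i\ne k$, $j\ne l$; or (2) there is a 2-edge $(i,j;k,l)\in E_2$ whose two opposite cells $(i,l)$ and $(k,j)$ are both occupied; or (3) there are a 2-edge $(i,j;p,q)\in E_2$ and a cell $(k,l)$ such that the five cells $(k,l),(k,j),(k,q),(i,l),(p,l)$ are pairwise distinct and all occupied. $z_2(m,n)$ is the maximum of $|E_1|+|E_2|$ over all such $G$ satisfying the simplicity condition and containing no generalized $C_4$-cycle. *)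

theory Defs
  imports Main
begin

type_synonym cell = "nat \<times> nat"
type_synonym edge2 = "cell \<times> cell"  (* ((i,j),(k,l)) represents the 2-edge (i,j;k,l) *)

definition wf_config :: "nat \<Rightarrow> nat \<Rightarrow> cell set \<Rightarrow> edge2 set \<Rightarrow> bool" where
  "wf_config m n E1 E2 \<longleftrightarrow>
     E1 \<subseteq> {1..m} \<times> {1..n} \<and>
     (\<forall>((i,j),(k,l)) \<in> E2. i \<in> {1..m} \<and> k \<in> {1..m} \<and> j \<in> {1..n} \<and> l \<in> {1..n}
                            \<and> i \<noteq> k \<and> j \<noteq> l)"

definition halves :: "edge2 \<Rightarrow> cell set" where
  "halves e = {fst e, snd e}"

definition simple_config :: "cell set \<Rightarrow> edge2 set \<Rightarrow> bool" where
  "simple_config E1 E2 \<longleftrightarrow>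
     (\<forall>e\<in>E2. \<forall>e'\<in>E2. e \<noteq> e' \<longrightarrow> halves e \<inter> halves e' = {}) \<and>
     (\<forall>e\<in>E2. halves e \<inter> E1 = {})"

definition occupied :: "cell set \<Rightarrow> edge2 set \<Rightarrow> cell \<Rightarrow> bool" where
  "occupied E1 E2 c \<longleftrightarrow> c \<in> E1 \<or> (\<exists>e\<in>E2. c \<in> halves e)"

definition has_gen_C4 :: "cell set \<Rightarrow> edge2 set \<Rightarrow> bool" where
  "has_gen_C4 E1 E2 \<longleftrightarrow>
     (\<exists>i j k l. i \<noteq> k \<and> j \<noteq> l \<and>
        (i,j) \<in> E1 \<and> (i,l) \<in> E1 \<and> (k,j) \<in> E1 \<and> (k,l) \<in> E1) \<or>
     (\<exists>i j k l. ((i,j),(k,l)) \<in> E2 \<and> occupied E1 E2 (i,l) \<and> occupied E1 E2 (k,j)) \<or>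
     (\<exists>i j p q k l. ((i,j),(p,q)) \<in> E2 \<and>
        distinct [(k,l),(k,j),(k,q),(i,l),(p,l)] \<and>
        (\<forall>c\<in>{(k,l),(k,j),(k,q),(i,l),(p,l)}. occupied E1 E2 c))"

definition z2 :: "nat \<Rightarrow> nat \<Rightarrow> nat" where
  "z2 m n = Max {card E1 + card E2 | E1 E2.
      wf_config m n E1 E2 \<and> simple_config E1 E2 \<and> \<not> has_gen_C4 E1 E2}"

end

theory Submission
  imports Defs
begin

(* Any two rows of a C4-free set share at most one column, so a C4-free subset of the 4 x 4 grid
   has at most 9 cells.  Now let (i,j;p,q) be a 2-edge and let k, l range over the two rows
   outside {i,p} and the two columns outside {j,q}.  Condition (2) leaves (i,q) or (p,j) free,
   and condition (3) leaves a free cell in each "cross" {(k,l),(k,j),(k,q),(i,l),(p,l)}; two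
   crosses on a diagonal of the complementary 2 x 2 block are disjoint, so at least 3 cells are
   free.  If exactly 3 are, the free cells of the four crosses coincide pairwise, which puts
   two of them in the columns j, q (or the rows i, p); together with the opposite free cell
   and the halves (i,j), (p,q) that leaves at most 3 cells of E1 in those two lines, and at most
   5 in the other two.  Since free cells + |E1| + 2|E2| = 16, in every case |E1| + |E2| <= 10. *)

definition C4_free :: "cell set \<Rightarrow> bool" where
  "C4_free E \<longleftrightarrow> \<not> (\<exists>i j k l. i \<noteq> k \<and> j \<noteq> l \<and>
      (i,j) \<in> E \<and> (i,l) \<in> E \<and> (k,j) \<in> E \<and> (k,l) \<in> E)"

lemma C4_free_converse [simp]: "C4_free (E\<inverse>) \<longleftrightarrow> C4_free E"
  unfolding C4_free_def by blast

lemma C4_free_if_not_has_gen_C4: "\<not> has_gen_C4 E1 E2 \<Longrightarrow> C4_free E1"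
  unfolding has_gen_C4_def C4_free_def by blast

lemma card_two_rows:
  assumes "finite E" "i \<noteq> k"
  shows "card (E \<inter> ({i,k} \<times> UNIV)) = card (E `` {i}) + card (E `` {k})"
proof -
  have "E \<inter> ({i,k} \<times> UNIV) = {i} \<times> E `` {i} \<union> {k} \<times> E `` {k}" by auto
  also have "card \<dots> = card ({i} \<times> E `` {i}) + card ({k} \<times> E `` {k})"
    using assms by (intro card_Un_disjoint) auto
  finally show ?thesis by (simp add: card_cartesian_product_singleton)
qed

lemma C4_free_card_two_row_images:
  assumes "C4_free E" "E \<subseteq> UNIV \<times> B" "finite B" "i \<noteq> k"
  shows "card (E `` {i}) + card (E `` {k}) \<le> card B + 1"
proof -
  have rows: "E `` {i} \<subseteq> B" "E `` {k} \<subseteq> B" using assms(2) by auto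
  then have fin: "finite (E `` {i})" "finite (E `` {k})" using assms(3) finite_subset by auto
  have "card (E `` {i} \<inter> E `` {k}) \<le> Suc 0"
    using assms(1,4) fin unfolding C4_free_def by (subst card_le_Suc0_iff_eq) auto
  moreover have "card (E `` {i} \<union> E `` {k}) \<le> card B"
    using rows assms(3) by (intro card_mono) auto
  ultimately show ?thesis using card_Un_Int[OF fin] by linarith
qed

lemma C4_free_card_two_rows:
  assumes "C4_free E" "E \<subseteq> A \<times> B" "finite A" "finite B" "i \<noteq> k"
  shows "card (E \<inter> ({i,k} \<times> UNIV)) \<le> card B + 1"
proof -
  have "finite E" using assms(2-4) finite_subset by blast
  moreover have "E \<subseteq> UNIV \<times> B" using assms(2) by blast
  ultimately show ?thesis
    using C4_free_card_two_row_images[OF assms(1) _ assms(4,5)] by (simp add: card_two_rows assms(5))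
qed

lemma C4_free_card_two_columns:
  assumes "C4_free E" "E \<subseteq> A \<times> B" "finite A" "finite B" "j \<noteq> l"
  shows "card (E \<inter> (UNIV \<times> {j,l})) \<le> card A + 1"
proof -
  have "E \<inter> (UNIV \<times> {j,l}) = (E\<inverse> \<inter> ({j,l} \<times> UNIV))\<inverse>" by auto
  moreover have "card (E\<inverse> \<inter> ({j,l} \<times> UNIV)) \<le> card A + 1"
    using assms by (intro C4_free_card_two_rows[where A = B and B = A]) auto
  ultimately show ?thesis by simp
qed

lemma C4_free_card_le_9:
  assumes "C4_free E" "E \<subseteq> {1..4} \<times> {1..4}"
  shows "card E \<le> 9"
proof -
  define d where "d r = card (E `` {r})" for r
  have fin: "finite E" using finite_subset[OF assms(2)] by simp
  have two_rows: "d r + d s \<le> 5" if "r \<noteq> s" for r s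
    using C4_free_card_two_row_images[OF assms(1) _ _ that, of "{1..4}"] assms(2)
    unfolding d_def by auto
  have "E = (SIGMA r:{1..4}. E `` {r})" using assms(2) by blast
  then have "card E = (\<Sum>r\<in>{1..4}. d r)"
    unfolding d_def using fin by (metis card_SigmaI finite_Image finite_atLeastAtMost)
  also have "{1..4} = {1, 2, 3, 4::nat}" by auto
  finally have "card E = d 1 + d 2 + d 3 + d 4" by simp
  then show ?thesis using two_rows[of 1 2] two_rows[of 1 3] two_rows[of 1 4]
      two_rows[of 2 3] two_rows[of 2 4] two_rows[of 3 4] by presburger
qed

lemma wf_config_E1_subset: "wf_config m n E1 E2 \<Longrightarrow> E1 \<subseteq> {1..m} \<times> {1..n}"
  unfolding wf_config_def by blast

lemma wf_config_E2D:
  "wf_config m n E1 E2 \<Longrightarrow> ((i,j),(p,q)) \<in> E2 \<Longrightarrow>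
     i \<in> {1..m} \<and> p \<in> {1..m} \<and> j \<in> {1..n} \<and> q \<in> {1..n} \<and> i \<noteq> p \<and> j \<noteq> q"
  unfolding wf_config_def by fastforce

lemma wf_config_E2_subset:
  "wf_config m n E1 E2 \<Longrightarrow> E2 \<subseteq> ({1..m} \<times> {1..n}) \<times> ({1..m} \<times> {1..n})"
  using wf_config_E2D by fastforce

definition free_cells :: "nat \<Rightarrow> nat \<Rightarrow> cell set \<Rightarrow> edge2 set \<Rightarrow> cell set" where
  "free_cells m n E1 E2 = {c \<in> {1..m} \<times> {1..n}. \<not> occupied E1 E2 c}"

lemma finite_free_cells [simp]: "finite (free_cells m n E1 E2)"
  unfolding free_cells_def by simp

lemma card_free_cells:
  assumes wf: "wf_config m n E1 E2" and simple: "simple_config E1 E2"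
  shows "card (free_cells m n E1 E2) + card E1 + 2 * card E2 = m * n"
proof -
  let ?G = "{1..m} \<times> {1..n}" and ?H = "\<Union>e\<in>E2. halves e"
  have fin: "finite E1" "finite E2"
    using finite_subset[OF wf_config_E1_subset[OF wf]] finite_subset[OF wf_config_E2_subset[OF wf]]
    by simp_all
  have "card (halves e) = 2" if "e \<in> E2" for e
    using that wf_config_E2D[OF wf] by (cases e) (auto simp: halves_def)
  then have "card ?H = 2 * card E2"
    using fin simple by (subst card_UN_disjoint) (auto simp: simple_config_def halves_def)
  moreover have "card (E1 \<union> ?H) = card E1 + card ?H"
    using fin simple by (intro card_Un_disjoint) (auto simp: simple_config_def halves_def)
  moreover have occ: "E1 \<union> ?H \<subseteq> ?G"
    using wf_config_E1_subset[OF wf] wf_config_E2_subset[OF wf] by (auto simp: halves_def)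
  moreover have "free_cells m n E1 E2 = ?G - (E1 \<union> ?H)"
    unfolding free_cells_def occupied_def by blast
  moreover have "card (?G - (E1 \<union> ?H)) + card (E1 \<union> ?H) = card ?G"
    using occ finite_subset[OF occ] card_mono[OF _ occ] by (simp add: card_Diff_subset)
  ultimately show ?thesis by (simp add: card_cartesian_product)
qed

lemma obtain_two_outside_pair:
  assumes "finite S" "4 \<le> card S"
  obtains k k' where "k \<in> S - {i,p}" "k' \<in> S - {i,p}" "k \<noteq> k'"
proof -
  have "card {i,p} \<le> 2" by (simp add: card_insert_if)
  then have "2 \<le> card (S - {i,p})"
    using assms(2) diff_card_le_card_Diff[of "{i,p}" S] by simp
  then obtain T where "T \<subseteq> S - {i,p}" "card T = 2"
    by (rule obtain_subset_with_card_n)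
  then show ?thesis using that by (auto simp: card_2_iff)
qed

lemma card_add_le_if_disjoint_part:
  assumes "finite A" "E \<subseteq> A \<union> B" "X \<subseteq> A" "X \<inter> E = {}"
  shows "card E + card X \<le> card A + card (E \<inter> B)"
proof -
  have "card E \<le> card (E \<inter> A) + card (E \<inter> B)"
    using assms(2) card_Un_le[of "E \<inter> A" "E \<inter> B"] by (simp add: Int_absorb2 flip: Int_Un_distrib)
  moreover have "card (E \<inter> A) + card X = card ((E \<inter> A) \<union> X)"
    using assms by (intro card_Un_disjoint[symmetric]) (auto intro: finite_subset)
  moreover have "card ((E \<inter> A) \<union> X) \<le> card A"
    using assms by (intro card_mono) auto
  ultimately show ?thesis by linarith
qed

definition cross :: "edge2 \<Rightarrow> cell \<Rightarrow> cell set" where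
  "cross e c = (case (e, c) of (((i,j),(p,q)),(k,l)) \<Rightarrow> {(k,l),(k,j),(k,q),(i,l),(p,l)})"

lemma cross_simp [simp]: "cross ((i,j),(p,q)) (k,l) = {(k,l),(k,j),(k,q),(i,l),(p,l)}"
  unfolding cross_def by simp

lemma not_has_gen_C4_opposite_free:
  "\<not> has_gen_C4 E1 E2 \<Longrightarrow> ((i,j),(p,q)) \<in> E2 \<Longrightarrow>
     \<exists>c\<in>{(i,q),(p,j)}. \<not> occupied E1 E2 c"
  unfolding has_gen_C4_def de_Morgan_disj by blast

lemma not_has_gen_C4_cross_free:
  assumes "\<not> has_gen_C4 E1 E2" "((i,j),(p,q)) \<in> E2" "i \<noteq> p" "j \<noteq> q"
    "k \<notin> {i,p}" "l \<notin> {j,q}"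
  shows "\<exists>c\<in>cross ((i,j),(p,q)) (k,l). \<not> occupied E1 E2 c"
proof -
  have "distinct [(k,l),(k,j),(k,q),(i,l),(p,l)]" using assms(3-6) by auto
  then show ?thesis using assms(1,2) unfolding has_gen_C4_def de_Morgan_disj cross_simp by blast
qed

lemma free_cells_opposite_and_diagonal_crosses:
  assumes wf: "wf_config m n E1 E2" and nc: "\<not> has_gen_C4 E1 E2" and e: "((i,j),(p,q)) \<in> E2"
    and k: "k \<in> {1..m} - {i,p}" "k' \<in> {1..m} - {i,p}" "k \<noteq> k'"
    and l: "l \<in> {1..n} - {j,q}" "l' \<in> {1..n} - {j,q}" "l \<noteq> l'"
  obtains z w w' where "z \<in> {(i,q),(p,j)}" "w \<in> cross ((i,j),(p,q)) (k,l)"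
    "w' \<in> cross ((i,j),(p,q)) (k',l')" "{z,w,w'} \<subseteq> free_cells m n E1 E2" "distinct [z,w,w']"
proof -
  note bounds = wf_config_E2D[OF wf e]
  obtain z where z: "z \<in> {(i,q),(p,j)}" "\<not> occupied E1 E2 z"
    using not_has_gen_C4_opposite_free[OF nc e] by blast
  obtain w where w: "w \<in> cross ((i,j),(p,q)) (k,l)" "\<not> occupied E1 E2 w"
    using not_has_gen_C4_cross_free[OF nc e] bounds k l by blast
  obtain w' where w': "w' \<in> cross ((i,j),(p,q)) (k',l')" "\<not> occupied E1 E2 w'"
    using not_has_gen_C4_cross_free[OF nc e] bounds k l by blast
  let ?X = "cross ((i,j),(p,q))"
  have grid: "{(i,q),(p,j)} \<union> ?X (k,l) \<union> ?X (k',l') \<subseteq> {1..m} \<times> {1..n}"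
    using bounds k l by auto
  have "{(i,q),(p,j)} \<inter> ?X (k,l) = {}" "{(i,q),(p,j)} \<inter> ?X (k',l') = {}"
    "?X (k,l) \<inter> ?X (k',l') = {}"
    using bounds k l by auto
  then have "distinct [z,w,w']" using z(1) w(1) w'(1)
    by (simp only: distinct.simps set_simps list.set) blast
  moreover have "{z,w,w'} \<subseteq> free_cells m n E1 E2"
    using grid z w w' unfolding free_cells_def by blast
  ultimately show ?thesis using that z(1) w(1) w'(1) by blast
qed

lemma card_free_cells_ge_3:
  assumes wf: "wf_config m n E1 E2" and nc: "\<not> has_gen_C4 E1 E2" and e: "((i,j),(p,q)) \<in> E2"
    and "4 \<le> m" "4 \<le> n"
  shows "3 \<le> card (free_cells m n E1 E2)"
proof -
  obtain k k' where k: "k \<in> {1..m} - {i,p}" "k' \<in> {1..m} - {i,p}" "k \<noteq> k'"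
    by (rule obtain_two_outside_pair[of "{1..m}"]) (use \<open>4 \<le> m\<close> in auto)
  obtain l l' where l: "l \<in> {1..n} - {j,q}" "l' \<in> {1..n} - {j,q}" "l \<noteq> l'"
    by (rule obtain_two_outside_pair[of "{1..n}"]) (use \<open>4 \<le> n\<close> in auto)
  obtain z w w' where sub: "{z,w,w'} \<subseteq> free_cells m n E1 E2" and "distinct [z,w,w']"
    using free_cells_opposite_and_diagonal_crosses[OF wf nc e k l] .
  then have "card {z,w,w'} = 3" using distinct_card[of "[z,w,w']"] by simp
  with card_mono[OF finite_free_cells sub] show ?thesis by simp
qed

lemma C4_free_card_le_8_if_two_columns_miss_5:
  assumes "C4_free E" "E \<subseteq> {1..4} \<times> {1..4}" "{1..4} \<subseteq> {j,q,l,l'}" "l \<noteq> l'"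
    "Y \<subseteq> {1..4} \<times> {j,q}" "card Y = 5" "Y \<inter> E = {}"
  shows "card E \<le> 8"
proof -
  have "card E + card Y \<le> card ({1..4::nat} \<times> {j,q}) + card (E \<inter> (UNIV \<times> {l,l'}))"
    by (rule card_add_le_if_disjoint_part) (use assms(2,3,5,7) in auto)
  moreover have "card ({1..4::nat} \<times> {j,q}) \<le> 8"
    by (simp add: card_cartesian_product card_insert_if)
  moreover have "card (E \<inter> (UNIV \<times> {l,l'})) \<le> 5"
    using C4_free_card_two_columns[OF assms(1,2) _ _ assms(4)] by simp
  ultimately show ?thesis using assms(6) by linarith
qed

lemma C4_free_card_le_8_if_two_rows_miss_5:
  assumes "C4_free E" "E \<subseteq> {1..4} \<times> {1..4}" "{1..4} \<subseteq> {i,p,k,k'}" "k \<noteq> k'"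
    "Y \<subseteq> {i,p} \<times> {1..4}" "card Y = 5" "Y \<inter> E = {}"
  shows "card E \<le> 8"
  using C4_free_card_le_8_if_two_columns_miss_5[of "E\<inverse>" i p k k' "Y\<inverse>"] assms by auto

lemma free_cells_in_two_lines_if_card_le_3:
  assumes wf: "wf_config m n E1 E2" and nc: "\<not> has_gen_C4 E1 E2" and e: "((i,j),(p,q)) \<in> E2"
    and k: "k1 \<in> {1..m} - {i,p}" "k2 \<in> {1..m} - {i,p}" "k1 \<noteq> k2"
    and l: "l1 \<in> {1..n} - {j,q}" "l2 \<in> {1..n} - {j,q}" "l1 \<noteq> l2"
    and three: "card (free_cells m n E1 E2) \<le> 3"
  obtains z w w' where "z \<in> {(i,q),(p,j)}" "{z,w,w'} \<subseteq> free_cells m n E1 E2" "distinct [z,w,w']"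
    "w \<in> {(k1,j),(k1,q)} \<and> w' \<in> {(k2,j),(k2,q)} \<or> w \<in> {(i,l1),(p,l1)} \<and> w' \<in> {(i,l2),(p,l2)}"
proof -
  let ?F = "free_cells m n E1 E2" and ?X = "cross ((i,j),(p,q))"
  note bounds = wf_config_E2D[OF wf e]
  obtain z w11 w22 where z: "z \<in> {(i,q),(p,j)}" and w11: "w11 \<in> ?X (k1,l1)"
      and w22: "w22 \<in> ?X (k2,l2)" and F1: "{z,w11,w22} \<subseteq> ?F" "distinct [z,w11,w22]"
    using free_cells_opposite_and_diagonal_crosses[OF wf nc e k l] .
  obtain z' w12 w21 where z': "z' \<in> {(i,q),(p,j)}" and w12: "w12 \<in> ?X (k1,l2)"
      and w21: "w21 \<in> ?X (k2,l1)" and F2: "{z',w12,w21} \<subseteq> ?F" "distinct [z',w12,w21]"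
    using free_cells_opposite_and_diagonal_crosses[OF wf nc e k l(2,1)] l(3) by metis
  have "{z,w11,w22} = ?F" "{z',w12,w21} = ?F"
    using F1 F2 three card_seteq[OF finite_free_cells] distinct_card[of "[z,w11,w22]"]
      distinct_card[of "[z',w12,w21]"] by auto
  moreover have "{(i,q),(p,j)} \<inter> (?X (k1,l1) \<union> ?X (k2,l2)) = {}"
    using bounds k l by auto
  ultimately have "w11 \<in> {w12,w21}" "w22 \<in> {w12,w21}"
    using z' w11 w22 by blast+
  then consider "w11 = w12" "w22 = w21" | "w11 = w21" "w22 = w12"
    using F1(2) by auto
  then have "w11 \<in> {(k1,j),(k1,q)} \<and> w22 \<in> {(k2,j),(k2,q)} \<or>
      w11 \<in> {(i,l1),(p,l1)} \<and> w22 \<in> {(i,l2),(p,l2)}"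
    using w11 w12 w21 w22 bounds k l by cases auto
  with z F1 that show ?thesis by blast
qed

lemma card_E1_le_8_if_3_free_cells:
  assumes wf: "wf_config 4 4 E1 E2" and simple: "simple_config E1 E2"
    and nc: "\<not> has_gen_C4 E1 E2" and e: "((i,j),(p,q)) \<in> E2"
    and three: "card (free_cells 4 4 E1 E2) \<le> 3"
  shows "card E1 \<le> 8"
proof -
  note bounds = wf_config_E2D[OF wf e]
  have E1_grid: "E1 \<subseteq> {1..4} \<times> {1..4}" by (rule wf_config_E1_subset[OF wf])
  have C4: "C4_free E1" by (rule C4_free_if_not_has_gen_C4[OF nc])
  obtain k1 k2 where k: "k1 \<in> {1..4} - {i,p}" "k2 \<in> {1..4} - {i,p}" "k1 \<noteq> k2"
    by (rule obtain_two_outside_pair[of "{1..4}" i p]) auto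
  obtain l1 l2 where l: "l1 \<in> {1..4} - {j,q}" "l2 \<in> {1..4} - {j,q}" "l1 \<noteq> l2"
    by (rule obtain_two_outside_pair[of "{1..4}" j q]) auto
  have rows: "{i,p,k1,k2} = {1..4}" and cols: "{j,q,l1,l2} = {1..4}"
    using bounds k l by (intro card_seteq; force simp: card_insert_if)+
  obtain z w w' where z: "z \<in> {(i,q),(p,j)}" and free: "{z,w,w'} \<subseteq> free_cells 4 4 E1 E2"
    and dist: "distinct [z,w,w']"
    and lines: "w \<in> {(k1,j),(k1,q)} \<and> w' \<in> {(k2,j),(k2,q)} \<or>
      w \<in> {(i,l1),(p,l1)} \<and> w' \<in> {(i,l2),(p,l2)}"
    using free_cells_in_two_lines_if_card_le_3[OF wf nc e k l three] .
  let ?Y = "{z,w,w',(i,j),(p,q)}"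
  have "free_cells 4 4 E1 E2 \<inter> E1 = {}" "{(i,j),(p,q)} \<inter> E1 = {}"
    using simple e unfolding free_cells_def occupied_def simple_config_def halves_def by auto
  then have Y_E1: "?Y \<inter> E1 = {}" using free by blast
  from lines show ?thesis
  proof
    assume pos: "w \<in> {(k1,j),(k1,q)} \<and> w' \<in> {(k2,j),(k2,q)}"
    have "?Y \<subseteq> {1..4} \<times> {j,q}" using pos z bounds k by auto
    moreover have "distinct [z,w,w',(i,j),(p,q)]" using pos z dist bounds k by auto
    then have "card ?Y = 5" using distinct_card by fastforce
    ultimately show ?thesis
      using C4_free_card_le_8_if_two_columns_miss_5[OF C4 E1_grid _ l(3) _ _ Y_E1] cols by blast
  next
    assume pos: "w \<in> {(i,l1),(p,l1)} \<and> w' \<in> {(i,l2),(p,l2)}"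
    have "?Y \<subseteq> {i,p} \<times> {1..4}" using pos z bounds l by auto
    moreover have "distinct [z,w,w',(i,j),(p,q)]" using pos z dist bounds l by auto
    then have "card ?Y = 5" using distinct_card by fastforce
    ultimately show ?thesis
      using C4_free_card_le_8_if_two_rows_miss_5[OF C4 E1_grid _ k(3) _ _ Y_E1] rows by blast
  qed
qed

lemma card_E1_add_card_E2_le_10:
  assumes wf: "wf_config 4 4 E1 E2" and simple: "simple_config E1 E2" and nc: "\<not> has_gen_C4 E1 E2"
  shows "card E1 + card E2 \<le> 10"
proof -
  have E1_le_9: "card E1 \<le> 9"
    by (rule C4_free_card_le_9[OF C4_free_if_not_has_gen_C4[OF nc] wf_config_E1_subset[OF wf]])
  show ?thesis
  proof (cases "E2 = {}")
    case True
    with E1_le_9 show ?thesis by simp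
  next
    case False
    then obtain i j p q where e: "((i,j),(p,q)) \<in> E2" by (metis ex_in_conv prod.collapse)
    have "card (free_cells 4 4 E1 E2) + card E1 + 2 * card E2 = 16"
      using card_free_cells[OF wf simple] by simp
    moreover have "3 \<le> card (free_cells 4 4 E1 E2)"
      using card_free_cells_ge_3[OF wf nc e] by simp
    moreover have "card (free_cells 4 4 E1 E2) \<le> 3 \<Longrightarrow> card E1 \<le> 8"
      using card_E1_le_8_if_3_free_cells[OF wf simple nc e] .
    ultimately show ?thesis using E1_le_9 by linarith
  qed
qed

definition extremal_E1 :: "cell set" where
  "extremal_E1 = {(1,2),(1,3),(2,3),(2,4),(3,1),(3,2),(3,4),(4,1),(4,3)}"

definition extremal_E2 :: "edge2 set" where
  "extremal_E2 = {((1,1),(2,2))}"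

lemma occupied_extremal_iff:
  "occupied extremal_E1 extremal_E2 c \<longleftrightarrow> c \<in> {(1,1),(2,2)} \<union> extremal_E1"
  unfolding occupied_def extremal_E2_def halves_def by auto

lemma occupied_extremal_grid:
  "occupied extremal_E1 extremal_E2 (k,l) \<Longrightarrow> k \<in> {1,2,3,4} \<and> l \<in> {1,2,3,4}"
  unfolding occupied_extremal_iff by (auto simp: extremal_E1_def)

lemma C4_free_extremal: "C4_free extremal_E1"
proof -
  have "extremal_E1 \<subseteq> {1,2,3,4} \<times> {1,2,3,4}" unfolding extremal_E1_def by auto
  moreover have "\<forall>i\<in>{1,2,3,4}. \<forall>j\<in>{1,2,3,4}. \<forall>k\<in>{1,2,3,4}. \<forall>l\<in>{1,2,3,4::nat}.
      \<not> (i \<noteq> k \<and> j \<noteq> l \<and> (i,j) \<in> extremal_E1 \<and> (i,l) \<in> extremal_E1 \<and>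
         (k,j) \<in> extremal_E1 \<and> (k,l) \<in> extremal_E1)"
    unfolding extremal_E1_def by simp
  ultimately show ?thesis unfolding C4_free_def by blast
qed

lemma not_has_gen_C4_extremal: "\<not> has_gen_C4 extremal_E1 extremal_E2"
proof -
  have "\<forall>k\<in>{1,2,3,4}. \<forall>l\<in>{1,2,3,4::nat}.
      \<not> (distinct [(k,l),(k,1),(k,2),(1,l),(2,l)] \<and>
         (\<forall>c\<in>{(k,l),(k,1),(k,2),(1,l),(2,l)}. occupied extremal_E1 extremal_E2 c))"
    unfolding occupied_extremal_iff by (simp add: extremal_E1_def)
  then have "\<not> (\<exists>i j p q k l. ((i,j),(p,q)) \<in> extremal_E2 \<and>
      distinct [(k,l),(k,j),(k,q),(i,l),(p,l)] \<and>
      (\<forall>c\<in>{(k,l),(k,j),(k,q),(i,l),(p,l)}. occupied extremal_E1 extremal_E2 c))"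
    using occupied_extremal_grid unfolding extremal_E2_def by blast
  moreover have "\<not> (\<exists>i j k l. ((i,j),(k,l)) \<in> extremal_E2 \<and>
      occupied extremal_E1 extremal_E2 (i,l) \<and> occupied extremal_E1 extremal_E2 (k,j))"
    unfolding occupied_extremal_iff by (auto simp: extremal_E1_def extremal_E2_def)
  ultimately show ?thesis
    using C4_free_extremal unfolding has_gen_C4_def C4_free_def by blast
qed

lemma extremal_config:
  "wf_config 4 4 extremal_E1 extremal_E2" "simple_config extremal_E1 extremal_E2"
  "card extremal_E1 + card extremal_E2 = 10"
  unfolding wf_config_def simple_config_def halves_def extremal_E1_def extremal_E2_def by auto

theorem theorem3p3:
  shows "z2 4 4 = 10"
proof -
  let ?S = "{card E1 + card E2 | E1 E2.
      wf_config 4 4 E1 E2 \<and> simple_config E1 E2 \<and> \<not> has_gen_C4 E1 E2}"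
  have le: "\<And>s. s \<in> ?S \<Longrightarrow> s \<le> 10" using card_E1_add_card_E2_le_10 by blast
  have "card extremal_E1 + card extremal_E2 \<in> ?S"
    using extremal_config(1,2) not_has_gen_C4_extremal by blast
  then have "10 \<in> ?S" by (simp only: extremal_config(3))
  moreover have "finite ?S" using le by (intro finite_subset[of ?S "{..10}"]) auto
  ultimately show ?thesis unfolding z2_def by (intro Max_eqI le)
qed
end
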